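(* Let $\rho\in(0,1)$, $\xi\in\mathbb{R}$, and $H=\frac{1}{2(1-\rho\cos x)}\big(\sin^2x\,(P_x^2+P_y^2)+\xi\big)$ on $(x,y)\in(0,\pi)\times\mathbb{R}$. On a level set $H=E\neq0$, $P_y=L>0$, set $\sigma=\frac1\rho\big(\frac{\xi}{2E}-1\big)$ and $\eta=\frac{\rho E}{L^2}$. If $\eta>0$ and $-1<\sigma<1$, the projection to the $(x,y)$-plane of a trajectory of the Hamiltonian flow on this level set, normalized by a translation in $y$ so that $y=0$ at $x=x_*$, has equation $$\cosh y=\frac{\eta-\cos x}{\sqrt{\eta^2+2\sigma\eta+1}},\qquad x\in(x_*,\pi),$$ where $\cos x_*=\eta-\sqrt{\eta^2+2\sigma\eta+1}$. *)

theory Defs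
  imports "HOL-Analysis.Analysis"
begin

definition Ham :: "real \<Rightarrow> real \<Rightarrow> real \<Rightarrow> real \<Rightarrow> real \<Rightarrow> real \<Rightarrow> real" where
  "Ham \<rho> \<xi> x y px py = (sin x ^ 2 * (px ^ 2 + py ^ 2) + \<xi>) / (2 * (1 - \<rho> * cos x))"

definition hamiltonian_trajectory ::
  "real \<Rightarrow> real \<Rightarrow> real set \<Rightarrow> (real \<Rightarrow> real) \<Rightarrow> (real \<Rightarrow> real) \<Rightarrow> (real \<Rightarrow> real) \<Rightarrow> (real \<Rightarrow> real) \<Rightarrow> bool"
  where
  "hamiltonian_trajectory \<rho> \<xi> I x y px py \<longleftrightarrow>
     (\<forall>t\<in>I.
        (x has_real_derivative deriv (\<lambda>q. Ham \<rho> \<xi> (x t) (y t) q (py t)) (px t)) (at t) \<and>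
        (y has_real_derivative deriv (\<lambda>q. Ham \<rho> \<xi> (x t) (y t) (px t) q) (py t)) (at t) \<and>
        (px has_real_derivative - deriv (\<lambda>q. Ham \<rho> \<xi> q (y t) (px t) (py t)) (x t)) (at t) \<and>
        (py has_real_derivative - deriv (\<lambda>q. Ham \<rho> \<xi> (x t) q (px t) (py t)) (y t)) (at t))"

end

theory Submission
  imports Defs
begin

(* On the level set H = E, P_y = L put D = sqrt (\<eta>^2 + 2 \<sigma> \<eta> + 1), W = (\<eta> - cos x) / D and
   V = sin x * P_x / (D L). The energy relation says exactly W^2 - V^2 = 1, and Hamilton's equations
   give W' = V y' and V' = W y': along the trajectory, (W, V) moves on this hyperbola by the
   hyperbolic rotation of angle y. Hence (W + V) exp (- y) is constant, and since |\<eta> - 1| < D keeps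
   W on the branch W \<ge> 1, W = cosh (y - c). The bound on x is W \<ge> 1, i.e. cos x \<le> \<eta> - D. *)

lemma one_minus_mult_cos_gt_0:
  fixes \<rho> x :: real
  assumes "\<bar>\<rho>\<bar> < 1"
  shows "0 < 1 - \<rho> * cos x"
proof -
  have "\<rho> * cos x \<le> \<bar>\<rho>\<bar> * \<bar>cos x\<bar>"
    by (metis abs_ge_self abs_mult)
  also have "\<dots> \<le> \<bar>\<rho>\<bar>"
    by (simp add: mult_left_le)
  finally show ?thesis
    using assms by linarith
qed

lemma abs_sub_one_less_sqrt:
  fixes \<eta> \<sigma> :: real
  assumes "0 < \<eta>" "-1 < \<sigma>"
  shows "\<bar>\<eta> - 1\<bar> < sqrt (\<eta> ^ 2 + 2 * \<sigma> * \<eta> + 1)"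
proof -
  have "0 < \<eta> * (1 + \<sigma>)" using assms by simp
  then have "(\<eta> - 1) ^ 2 < \<eta> ^ 2 + 2 * \<sigma> * \<eta> + 1"
    by (simp add: power2_eq_square algebra_simps)
  then have "sqrt ((\<eta> - 1) ^ 2) < sqrt (\<eta> ^ 2 + 2 * \<sigma> * \<eta> + 1)"
    by (rule real_sqrt_less_mono)
  then show ?thesis by simp
qed

lemma arccos_le_of_cos_le:
  fixes x u :: real
  assumes "0 \<le> x" "x \<le> pi" "cos x \<le> u" "u \<le> 1"
  shows "arccos u \<le> x"
proof -
  have "arccos u \<le> arccos (cos x)"
    using assms(3,4) by (intro arccos_le_arccos) auto
  also have "arccos (cos x) = x"
    using assms(1,2) by (rule arccos_cos)
  finally show ?thesis .
qed

lemma cosh_eq_of_hyperbola: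
  fixes w v u :: real
  assumes "w ^ 2 - v ^ 2 = 1" "w + v = exp u"
  shows "w = cosh u"
proof -
  have "(w + v) * (w - v) = 1"
    using assms(1) by (simp add: algebra_simps power2_eq_square)
  then have "w - v = exp (- u)"
    unfolding assms(2) by (simp add: exp_minus field_simps)
  with assms(2) show ?thesis
    by (simp add: cosh_def)
qed

lemma hyperbolic_rotation_eq_cosh:
  fixes w v y \<omega> :: "real \<Rightarrow> real"
  assumes "convex I"
    and y: "\<And>t. t \<in> I \<Longrightarrow> (y has_real_derivative \<omega> t) (at t)"
    and w: "\<And>t. t \<in> I \<Longrightarrow> (w has_real_derivative v t * \<omega> t) (at t)"
    and v: "\<And>t. t \<in> I \<Longrightarrow> (v has_real_derivative w t * \<omega> t) (at t)"
    and hyperbola: "\<And>t. t \<in> I \<Longrightarrow> w t ^ 2 - v t ^ 2 = 1"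
    and branch: "\<And>t. t \<in> I \<Longrightarrow> -1 < w t"
  shows "\<exists>c. \<forall>t\<in>I. w t = cosh (y t - c)"
proof -
  have "((\<lambda>t. (w t + v t) * exp (- y t)) has_real_derivative 0) (at t within I)" if "t \<in> I" for t
    by (rule has_field_derivative_at_within)
       (auto intro!: derivative_eq_intros y w v that simp: algebra_simps)
  then have "\<exists>c. \<forall>t\<in>I. (w t + v t) * exp (- y t) = c"
    by (intro has_field_derivative_zero_constant[OF \<open>convex I\<close>])
  then obtain c where c: "\<And>t. t \<in> I \<Longrightarrow> (w t + v t) * exp (- y t) = c"
    by blast
  have "w t = cosh (y t - (- ln c))" if "t \<in> I" for t
  proof -
    have "1 \<le> w t ^ 2"
      using hyperbola[OF that] zero_le_power2[of "v t"] by linarith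
    with branch[OF that] have "0 < w t"
      using abs_square_less_1[of "w t"] by (auto simp: abs_less_iff)
    moreover have "(- v t) ^ 2 < w t ^ 2"
      using hyperbola[OF that] by simp
    ultimately have "0 < w t + v t"
      using power2_less_imp_less[of "- v t" "w t"] by simp
    then have "0 < c"
      unfolding c[OF that, symmetric] by simp
    then have "w t + v t = exp (y t - (- ln c))"
      using c[OF that] by (simp add: exp_add exp_minus field_simps)
    with hyperbola[OF that] show ?thesis
      by (rule cosh_eq_of_hyperbola)
  qed
  then show ?thesis by blast
qed

lemma Ham_has_derivative_px:
  assumes "\<rho> * cos x \<noteq> 1"
  shows "((\<lambda>q. Ham \<rho> \<xi> x y q r) has_real_derivative sin x ^ 2 * p / (1 - \<rho> * cos x)) (at p)"
proof -
  have "2 * (1 - \<rho> * cos x) \<noteq> 0" using assms by simp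
  then show ?thesis
    unfolding Ham_def by (auto intro!: derivative_eq_intros simp: divide_simps)
qed

lemma Ham_has_derivative_py:
  assumes "\<rho> * cos x \<noteq> 1"
  shows "((\<lambda>q. Ham \<rho> \<xi> x y p q) has_real_derivative sin x ^ 2 * r / (1 - \<rho> * cos x)) (at r)"
proof -
  have "2 * (1 - \<rho> * cos x) \<noteq> 0" using assms by simp
  then show ?thesis
    unfolding Ham_def by (auto intro!: derivative_eq_intros simp: divide_simps)
qed

lemma Ham_has_derivative_x:
  assumes "\<rho> * cos x \<noteq> 1"
  shows "((\<lambda>q. Ham \<rho> \<xi> q y p r) has_real_derivative
           (sin x * cos x * (p ^ 2 + r ^ 2) - \<rho> * sin x * Ham \<rho> \<xi> x y p r) / (1 - \<rho> * cos x)) (at x)"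
proof -
  have "2 * (1 - \<rho> * cos x) \<noteq> 0" using assms by simp
  then show ?thesis
    unfolding Ham_def
    by (auto intro!: derivative_eq_intros simp: divide_simps) (simp add: algebra_simps power2_eq_square)
qed

lemma hamiltonian_trajectory_equations:
  assumes "hamiltonian_trajectory \<rho> \<xi> I x y px py" "\<bar>\<rho>\<bar> < 1" "t \<in> I"
  shows "(x has_real_derivative sin (x t) ^ 2 * px t / (1 - \<rho> * cos (x t))) (at t)"
    and "(y has_real_derivative sin (x t) ^ 2 * py t / (1 - \<rho> * cos (x t))) (at t)"
    and "(px has_real_derivative
           - ((sin (x t) * cos (x t) * (px t ^ 2 + py t ^ 2) - \<rho> * sin (x t) * Ham \<rho> \<xi> (x t) (y t) (px t) (py t))
              / (1 - \<rho> * cos (x t)))) (at t)"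
proof -
  have "\<rho> * cos (x t) \<noteq> 1"
    using one_minus_mult_cos_gt_0[OF assms(2), of "x t"] by simp
  note partials = Ham_has_derivative_px[OF this] Ham_has_derivative_py[OF this] Ham_has_derivative_x[OF this]
  from assms(1,3) have
    "(x has_real_derivative deriv (\<lambda>q. Ham \<rho> \<xi> (x t) (y t) q (py t)) (px t)) (at t)"
    "(y has_real_derivative deriv (\<lambda>q. Ham \<rho> \<xi> (x t) (y t) (px t) q) (py t)) (at t)"
    "(px has_real_derivative - deriv (\<lambda>q. Ham \<rho> \<xi> q (y t) (px t) (py t)) (x t)) (at t)"
    unfolding hamiltonian_trajectory_def by auto
  then show
    "(x has_real_derivative sin (x t) ^ 2 * px t / (1 - \<rho> * cos (x t))) (at t)"
    "(y has_real_derivative sin (x t) ^ 2 * py t / (1 - \<rho> * cos (x t))) (at t)"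
    "(px has_real_derivative
       - ((sin (x t) * cos (x t) * (px t ^ 2 + py t ^ 2) - \<rho> * sin (x t) * Ham \<rho> \<xi> (x t) (y t) (px t) (py t))
          / (1 - \<rho> * cos (x t)))) (at t)"
    unfolding partials[THEN DERIV_imp_deriv] .
qed

lemma level_set_hyperbola:
  fixes \<rho> \<xi> x y p L E \<sigma> \<eta> D :: real
  assumes "Ham \<rho> \<xi> x y p L = E" "\<rho> * cos x \<noteq> 1" "\<rho> \<noteq> 0" "E \<noteq> 0" "L \<noteq> 0" "D \<noteq> 0"
    and "\<sigma> = (1 / \<rho>) * (\<xi> / (2 * E) - 1)" "\<eta> = \<rho> * E / L ^ 2" "D ^ 2 = \<eta> ^ 2 + 2 * \<sigma> * \<eta> + 1"
  shows "((\<eta> - cos x) / D) ^ 2 - (sin x * p / (D * L)) ^ 2 = 1"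
proof -
  have energy: "sin x ^ 2 * p ^ 2 = 2 * E * (1 - \<rho> * cos x) - \<xi> - sin x ^ 2 * L ^ 2"
    using assms(1,2) by (simp add: Ham_def field_simps)
  have \<xi>: "\<xi> = 2 * E * (1 + \<rho> * \<sigma>)" using assms(3,4,7) by (simp add: field_simps)
  have \<rho>E: "\<rho> * E = \<eta> * L ^ 2" using assms(5,8) by simp
  have "(\<eta> - cos x) ^ 2 * L ^ 2 - (sin x * p) ^ 2
        = (\<eta> - cos x) ^ 2 * L ^ 2 - (2 * E * (1 - \<rho> * cos x) - 2 * E * (1 + \<rho> * \<sigma>) - (1 - cos x ^ 2) * L ^ 2)"
    unfolding power_mult_distrib energy unfolding \<xi> sin_squared_eq ..
  also have "\<dots> = (\<eta> ^ 2 + 2 * \<sigma> * \<eta> + 1) * L ^ 2 + 2 * (cos x + \<sigma>) * (\<rho> * E - \<eta> * L ^ 2)"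
    by (simp add: algebra_simps power2_eq_square)
  also have "\<dots> = D ^ 2 * L ^ 2" unfolding \<rho>E assms(9) by simp
  finally have "(\<eta> - cos x) ^ 2 * L ^ 2 - (sin x * p) ^ 2 = D ^ 2 * L ^ 2" .
  then have "(((\<eta> - cos x) / D) ^ 2 - (sin x * p / (D * L)) ^ 2) * (D ^ 2 * L ^ 2) = 1 * (D ^ 2 * L ^ 2)"
    using assms(5,6) by (simp add: power_divide power_mult_distrib left_diff_distrib)
  then show ?thesis
    using assms(5,6) by simp
qed

lemma level_set_hyperbolic_rotation:
  fixes \<rho> \<xi> E L \<eta> D :: real
  assumes traj: "hamiltonian_trajectory \<rho> \<xi> I x y px py" and "\<bar>\<rho>\<bar> < 1" "t \<in> I"
    and "py t = L" "Ham \<rho> \<xi> (x t) (y t) (px t) L = E" "\<eta> * L ^ 2 = \<rho> * E" "D \<noteq> 0" "L \<noteq> 0"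
  defines "\<omega> \<equiv> sin (x t) ^ 2 * L / (1 - \<rho> * cos (x t))"
  shows "((\<lambda>t. (\<eta> - cos (x t)) / D) has_real_derivative sin (x t) * px t / (D * L) * \<omega>) (at t)"
    and "((\<lambda>t. sin (x t) * px t / (D * L)) has_real_derivative (\<eta> - cos (x t)) / D * \<omega>) (at t)"
proof -
  define k where "k = 1 - \<rho> * cos (x t)"
  have k: "k \<noteq> 0"
    using one_minus_mult_cos_gt_0[OF assms(2), of "x t"] by (simp add: k_def)
  note eqs = hamiltonian_trajectory_equations[OF traj assms(2,3), unfolded assms(4), unfolded assms(5), folded k_def]
  show "((\<lambda>t. (\<eta> - cos (x t)) / D) has_real_derivative sin (x t) * px t / (D * L) * \<omega>) (at t)"
    unfolding \<omega>_def k_def[symmetric] using assms(7,8) k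
    by (auto intro!: derivative_eq_intros eqs(1) simp: field_simps power2_eq_square)
  have "((\<lambda>t. sin (x t) * px t / (D * L)) has_real_derivative
          sin (x t) ^ 2 * (\<rho> * E - cos (x t) * L ^ 2) / (k * D * L)) (at t)"
    using assms(7,8) k
    by (auto intro!: derivative_eq_intros eqs(1,3) simp: field_simps power2_eq_square)
  then show "((\<lambda>t. sin (x t) * px t / (D * L)) has_real_derivative (\<eta> - cos (x t)) / D * \<omega>) (at t)"
    unfolding \<omega>_def k_def[symmetric] assms(6)[symmetric]
    by (rule DERIV_cong) (use assms(7,8) k in \<open>simp add: field_simps power2_eq_square\<close>)
qed

lemma level_set_eq_cosh:
  fixes \<rho> \<xi> E L \<sigma> \<eta> D :: real
  assumes traj: "hamiltonian_trajectory \<rho> \<xi> I x y px py" and "convex I"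
    and \<rho>: "\<bar>\<rho>\<bar> < 1" "\<rho> \<noteq> 0" and "E \<noteq> 0" "L \<noteq> 0"
    and level: "\<And>t. t \<in> I \<Longrightarrow> Ham \<rho> \<xi> (x t) (y t) (px t) (py t) = E" "\<And>t. t \<in> I \<Longrightarrow> py t = L"
    and \<sigma>: "\<sigma> = (1 / \<rho>) * (\<xi> / (2 * E) - 1)" and \<eta>: "\<eta> = \<rho> * E / L ^ 2"
    and D: "\<bar>\<eta> - 1\<bar> < D" "D ^ 2 = \<eta> ^ 2 + 2 * \<sigma> * \<eta> + 1"
  shows "\<exists>c. \<forall>t\<in>I. (\<eta> - cos (x t)) / D = cosh (y t - c)"
proof -
  define W where "W = (\<lambda>t. (\<eta> - cos (x t)) / D)"
  define V where "V = (\<lambda>t. sin (x t) * px t / (D * L))"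
  define \<omega> where "\<omega> = (\<lambda>t. sin (x t) ^ 2 * L / (1 - \<rho> * cos (x t)))"
  have "0 < D"
    using D(1) abs_ge_zero[of "\<eta> - 1"] by linarith
  have energy: "Ham \<rho> \<xi> (x t) (y t) (px t) L = E" if "t \<in> I" for t
    using level[OF that] by simp
  have "\<rho> * cos (x t) \<noteq> 1" for t
    using one_minus_mult_cos_gt_0[OF \<rho>(1), of "x t"] by simp
  then have hyperbola: "W t ^ 2 - V t ^ 2 = 1" if "t \<in> I" for t
    unfolding W_def V_def using \<open>0 < D\<close> \<open>E \<noteq> 0\<close> \<open>L \<noteq> 0\<close> \<sigma> \<eta> D(2)
    by (intro level_set_hyperbola[OF energy[OF that] _ \<rho>(2)]) auto
  have branch: "-1 < W t" for t
  proof -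
    have "- D < \<eta> - cos (x t)"
      using D(1) cos_le_one[of "x t"] unfolding abs_less_iff by linarith
    with \<open>0 < D\<close> show ?thesis
      unfolding W_def by (simp add: field_simps)
  qed
  have "\<eta> * L ^ 2 = \<rho> * E"
    using \<eta> \<open>L \<noteq> 0\<close> by simp
  have "\<exists>c. \<forall>t\<in>I. W t = cosh (y t - c)"
  proof (rule hyperbolic_rotation_eq_cosh[OF \<open>convex I\<close>, where \<omega> = \<omega>])
    fix t assume t: "t \<in> I"
    show "(y has_real_derivative \<omega> t) (at t)"
      using hamiltonian_trajectory_equations(2)[OF traj \<rho>(1) t] level(2)[OF t]
      unfolding \<omega>_def by simp
    show "(W has_real_derivative V t * \<omega> t) (at t)" "(V has_real_derivative W t * \<omega> t) (at t)"
      using level_set_hyperbolic_rotation[OF traj \<rho>(1) t level(2)[OF t] energy[OF t] \<open>\<eta> * L ^ 2 = \<rho> * E\<close>]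
        \<open>0 < D\<close> \<open>L \<noteq> 0\<close>
      unfolding W_def V_def \<omega>_def by auto
  qed (use hyperbola branch in auto)
  then show ?thesis
    unfolding W_def .
qed

theorem proposition4:
  fixes \<rho> \<xi> E L a b :: real and x y px py :: "real \<Rightarrow> real"
  assumes "0 < \<rho>" "\<rho> < 1"
    and "a < b"
    and "hamiltonian_trajectory \<rho> \<xi> {a<..<b} x y px py"
    and "\<forall>t\<in>{a<..<b}. 0 < x t \<and> x t < pi"
    and "\<forall>t\<in>{a<..<b}. Ham \<rho> \<xi> (x t) (y t) (px t) (py t) = E"
    and "\<forall>t\<in>{a<..<b}. py t = L"
    and "E \<noteq> 0" "L > 0"
    and "\<sigma> = (1 / \<rho>) * (\<xi> / (2 * E) - 1)"
    and "\<eta> = \<rho> * E / L ^ 2"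
    and "\<eta> > 0" "-1 < \<sigma>" "\<sigma> < 1"
  shows "\<exists>c. \<forall>t\<in>{a<..<b}.
           cosh (y t - c) = (\<eta> - cos (x t)) / sqrt (\<eta> ^ 2 + 2 * \<sigma> * \<eta> + 1) \<and>
           arccos (\<eta> - sqrt (\<eta> ^ 2 + 2 * \<sigma> * \<eta> + 1)) \<le> x t"
proof -
  define D where "D = sqrt (\<eta> ^ 2 + 2 * \<sigma> * \<eta> + 1)"
  have D: "\<bar>\<eta> - 1\<bar> < D"
    unfolding D_def using assms(12,13) by (rule abs_sub_one_less_sqrt)
  then have "0 < D"
    using abs_ge_zero[of "\<eta> - 1"] by linarith
  then have "D ^ 2 = \<eta> ^ 2 + 2 * \<sigma> * \<eta> + 1"
    unfolding D_def by simp
  with D obtain c where c: "\<forall>t\<in>{a<..<b}. (\<eta> - cos (x t)) / D = cosh (y t - c)"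
    using level_set_eq_cosh[OF assms(4) convex_real_interval(8), of E L \<sigma> \<eta> D] assms(1,2,6-11)
    by auto
  show ?thesis
  proof (intro exI ballI conjI)
    fix t assume t: "t \<in> {a<..<b}"
    show "cosh (y t - c) = (\<eta> - cos (x t)) / sqrt (\<eta> ^ 2 + 2 * \<sigma> * \<eta> + 1)"
      using c t unfolding D_def by simp
    have "1 \<le> (\<eta> - cos (x t)) / D"
      using c t cosh_real_ge_1 by simp
    with \<open>0 < D\<close> have "cos (x t) \<le> \<eta> - D"
      by (simp add: field_simps)
    then show "arccos (\<eta> - sqrt (\<eta> ^ 2 + 2 * \<sigma> * \<eta> + 1)) \<le> x t"
      unfolding D_def[symmetric] using bspec[OF assms(5) t] D
      by (intro arccos_le_of_cos_le) (auto simp: abs_less_iff)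
  qed
qed

end
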